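(* Let $A\in\mathbb Z^{d\times n}$ with $\ker(A)\cap\mathbb N^n=\{0\}$. Let $\mathcal B$ be the set of minimal distance reducing Markov bases of $A$ and $\mathcal B^s$ the set of minimal strongly distance reducing Markov bases. Then, with elements of $\ker(A)$ identified with their negatives, $D(A)=\bigcap_{B\in\mathcal B}B$ and $D^w(A)=\bigcap_{B\in\mathcal B^s}B$; i.e., a nonzero $z\in\ker(A)$ lies in $D(A)$ if and only if $z\in B$ or $-z\in B$ for every $B\in\mathcal B$, and lies in $D^w(A)$ if and only if $z\in B$ or $-z\in B$ for every $B\in\mathcal B^s$.
   Context: For $z\in\mathbb Z^n$, $z^\pm\in\mathbb N^n$ are the unique vectors with disjoint supports and $z=z^+-z^-$; $\|\cdot\|$ is the $1$-norm; $\le$ is coordinatewise. A positive (resp. negative) distance decomposition of $z\in\ker(A)$ is $z=u+v$ with $u,v\in\ker(A)\setminus\{0\}$, $u^+\le z^+$ (resp. $u^-\le z^-$) and $\|v\|<\|z\|$. $D^+(A)$ (resp. $D^-(A)$) is the set of nonzero $z\in\ker(A)$ with no positive (resp. negative) distance decomposition; $D(A)=D^+(A)\cap D^-(A)$, $D^w(A)=D^+(A)\cup D^-(A)$. For nonzero $z\in\ker(A)$: $u$ reduces $z$ from $z^+$ if some $\varepsilon\in\{\pm1\}$ has $z^++\varepsilon u\in\mathbb N^n$ and $\|z^++\varepsilon u-z^-\|<\|z\|$; from $z^-$ if some $\varepsilon$ has $z^-+\varepsilon u\in\mathbb N^n$ and $\|z^+-(z^-+\varepsilon u)\|<\|z\|$.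 $B\subseteq\ker(A)$ is distance reducing if each nonzero $z$ is reduced from $z^+$ or $z^-$ by some element of $B$; strongly distance reducing if each nonzero $z$ is reduced from $z^+$ by some element of $B$ and from $z^-$ by some element of $B$. A minimal (strongly) distance reducing Markov basis is a (strongly) distance reducing set no proper subset of which is (strongly) distance reducing. *)

theory Defs
  imports "HOL-Analysis.Analysis"
begin

text \<open>Integer vectors in Z^n are modelled as int ^ 'n (n = CARD('n)); the
integer matrix A in Z^(d x n) as int ^ 'n ^ 'd, acting by matrix-vector product.\<close>

definition kerZ :: "int ^ 'n ^ 'd \<Rightarrow> (int ^ 'n) set" where
  "kerZ A = {z. A *v z = 0}"

definition natvec :: "int ^ 'n \<Rightarrow> bool" where
  "natvec v \<longleftrightarrow> (\<forall>i. 0 \<le> v $ i)"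

definition leq_vec :: "int ^ 'n \<Rightarrow> int ^ 'n \<Rightarrow> bool" where
  "leq_vec u v \<longleftrightarrow> (\<forall>i. u $ i \<le> v $ i)"

definition norm1 :: "int ^ 'n \<Rightarrow> int" where
  "norm1 z = (\<Sum>i\<in>UNIV. \<bar>z $ i\<bar>)"

definition posp :: "int ^ 'n \<Rightarrow> int ^ 'n" where
  "posp z = (\<chi> i. max (z $ i) 0)"

definition negp :: "int ^ 'n \<Rightarrow> int ^ 'n" where
  "negp z = (\<chi> i. max (- (z $ i)) 0)"

definition pos_dist_decomp :: "int ^ 'n ^ 'd \<Rightarrow> int ^ 'n \<Rightarrow> int ^ 'n \<Rightarrow> int ^ 'n \<Rightarrow> bool" where
  "pos_dist_decomp A z u v \<longleftrightarrow> z = u + v \<and> u \<in> kerZ A \<and> v \<in> kerZ A \<and> u \<noteq> 0 \<and> v \<noteq> 0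
     \<and> leq_vec (posp u) (posp z) \<and> norm1 v < norm1 z"

definition neg_dist_decomp :: "int ^ 'n ^ 'd \<Rightarrow> int ^ 'n \<Rightarrow> int ^ 'n \<Rightarrow> int ^ 'n \<Rightarrow> bool" where
  "neg_dist_decomp A z u v \<longleftrightarrow> z = u + v \<and> u \<in> kerZ A \<and> v \<in> kerZ A \<and> u \<noteq> 0 \<and> v \<noteq> 0
     \<and> leq_vec (negp u) (negp z) \<and> norm1 v < norm1 z"

definition Dplus :: "int ^ 'n ^ 'd \<Rightarrow> (int ^ 'n) set" where
  "Dplus A = {z \<in> kerZ A. z \<noteq> 0 \<and> \<not> (\<exists>u v. pos_dist_decomp A z u v)}"

definition Dminus :: "int ^ 'n ^ 'd \<Rightarrow> (int ^ 'n) set" where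
  "Dminus A = {z \<in> kerZ A. z \<noteq> 0 \<and> \<not> (\<exists>u v. neg_dist_decomp A z u v)}"

definition Dset :: "int ^ 'n ^ 'd \<Rightarrow> (int ^ 'n) set" where
  "Dset A = Dplus A \<inter> Dminus A"

definition Dw :: "int ^ 'n ^ 'd \<Rightarrow> (int ^ 'n) set" where
  "Dw A = Dplus A \<union> Dminus A"

definition reduces_plus :: "int ^ 'n \<Rightarrow> int ^ 'n \<Rightarrow> bool" where
  "reduces_plus u z \<longleftrightarrow> (\<exists>\<epsilon>\<in>{1, -1::int}.
      natvec (posp z + \<epsilon> *s u) \<and> norm1 (posp z + \<epsilon> *s u - negp z) < norm1 z)"

definition reduces_minus :: "int ^ 'n \<Rightarrow> int ^ 'n \<Rightarrow> bool" where
  "reduces_minus u z \<longleftrightarrow> (\<exists>\<epsilon>\<in>{1, -1::int}.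
      natvec (negp z + \<epsilon> *s u) \<and> norm1 (posp z - (negp z + \<epsilon> *s u)) < norm1 z)"

definition dist_reducing :: "int ^ 'n ^ 'd \<Rightarrow> (int ^ 'n) set \<Rightarrow> bool" where
  "dist_reducing A B \<longleftrightarrow> B \<subseteq> kerZ A \<and>
     (\<forall>z\<in>kerZ A. z \<noteq> 0 \<longrightarrow> (\<exists>u\<in>B. reduces_plus u z \<or> reduces_minus u z))"

definition strongly_dist_reducing :: "int ^ 'n ^ 'd \<Rightarrow> (int ^ 'n) set \<Rightarrow> bool" where
  "strongly_dist_reducing A B \<longleftrightarrow> B \<subseteq> kerZ A \<and>
     (\<forall>z\<in>kerZ A. z \<noteq> 0 \<longrightarrow> (\<exists>u\<in>B. reduces_plus u z) \<and> (\<exists>u\<in>B. reduces_minus u z))"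

definition minimal_dist_reducing :: "int ^ 'n ^ 'd \<Rightarrow> (int ^ 'n) set \<Rightarrow> bool" where
  "minimal_dist_reducing A B \<longleftrightarrow> dist_reducing A B \<and> (\<forall>B'. B' \<subset> B \<longrightarrow> \<not> dist_reducing A B')"

definition minimal_strongly_dist_reducing :: "int ^ 'n ^ 'd \<Rightarrow> (int ^ 'n) set \<Rightarrow> bool" where
  "minimal_strongly_dist_reducing A B \<longleftrightarrow> strongly_dist_reducing A B \<and>
     (\<forall>B'. B' \<subset> B \<longrightarrow> \<not> strongly_dist_reducing A B')"

end

theory Submission
  imports Defs
begin

text \<open>
  A set \<open>B \<subseteq> ker(A)\<close> is distance reducing exactly when it meets, for every nonzero
  \<open>z \<in> ker(A)\<close>, the set of elements reducing \<open>z\<close> from \<open>z\<^sup>+\<close> or \<open>z\<^sup>-\<close>; it is strongly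
  distance reducing when it meets every set of elements reducing some \<open>z\<close> from \<open>z\<^sup>+\<close>
  (reducing \<open>z\<close> from \<open>z\<^sup>-\<close> is reducing \<open>-z\<close> from \<open>(-z)\<^sup>+\<close>). A reducer of \<open>z\<close> has
  entries bounded by \<open>2|z|\<^sub>1\<close>, so all these sets are finite, and Zorn's lemma shows that
  every hitting set of a family of finite sets contains a minimal one. Hence \<open>z\<close> or \<open>-z\<close> lies
  in every minimal hitting set inside \<open>ker(A)\<close> iff some member of the family meets \<open>ker(A)\<close>
  only in \<open>{z, -z}\<close>. As every \<open>w \<noteq> 0\<close> reduces itself, that member is the set of reducers of \<open>z\<close> or \<open>-z\<close>,
  and a reducer \<open>u \<noteq> \<plusminus>z\<close> of \<open>z\<close> from \<open>z\<^sup>+\<close> amounts to a positive distance decomposition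
  \<open>z = u + (z - u)\<close>.
\<close>

section \<open>Minimal hitting sets\<close>

definition hitting_set :: "'a set set \<Rightarrow> 'a set \<Rightarrow> bool" where
  "hitting_set F B \<longleftrightarrow> (\<forall>S\<in>F. S \<inter> B \<noteq> {})"

definition minimal_hitting_set :: "'a set set \<Rightarrow> 'a set \<Rightarrow> bool" where
  "minimal_hitting_set F B \<longleftrightarrow> hitting_set F B \<and> (\<forall>B'. B' \<subset> B \<longrightarrow> \<not> hitting_set F B')"

lemma hitting_set_Inter_chain:
  assumes fin: "\<forall>S\<in>F. finite S" and "C \<noteq> {}" and chain: "subset.chain \<A> C"
    and hit: "\<forall>B\<in>C. hitting_set F B"
  shows "hitting_set F (\<Inter>C)"
  unfolding hitting_set_def
proof (intro ballI notI)
  fix S assume "S \<in> F" and disjoint: "S \<inter> \<Inter>C = {}"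
  then have "S \<noteq> {}"
    using hit \<open>C \<noteq> {}\<close> by (auto simp: hitting_set_def)
  have "\<forall>s\<in>S. \<exists>B. B \<in> C \<and> s \<notin> B"
    using disjoint by blast
  then obtain pick where pick: "\<forall>s\<in>S. pick s \<in> C \<and> s \<notin> pick s"
    by (rule bchoice[THEN exE])
  have "subset.chain \<A> (pick ` S)"
    using chain pick by (auto simp: subset_chain_def)
  then have "\<Inter>(pick ` S) \<in> pick ` S"
    using fin \<open>S \<in> F\<close> \<open>S \<noteq> {}\<close> by (intro Inter_in_chain) auto
  then have "S \<inter> \<Inter>(pick ` S) \<noteq> {}"
    using hit pick \<open>S \<in> F\<close> unfolding hitting_set_def by auto
  moreover have "S \<inter> \<Inter>(pick ` S) = {}"
    using pick by blast
  ultimately show False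
    by contradiction
qed

text \<open>Zorn's lemma, applied to the complements of the hitting sets contained in \<open>K\<close>.\<close>

lemma hitting_set_contains_minimal:
  assumes fin: "\<forall>S\<in>F. finite S" and "hitting_set F K"
  obtains B where "B \<subseteq> K" "minimal_hitting_set F B"
proof -
  define \<A> where "\<A> = uminus ` {B. B \<subseteq> K \<and> hitting_set F B}"
  have "\<Union>\<C> \<in> \<A>" if "\<C> \<noteq> {}" "subset.chain \<A> \<C>" for \<C>
  proof -
    have nonempty: "uminus ` \<C> \<noteq> {}"
      using that(1) by blast
    have chain: "subset.chain {B. B \<subseteq> K \<and> hitting_set F B} (uminus ` \<C>)"
      using that(2) by (auto simp: subset_chain_def \<A>_def)
    then have "hitting_set F (\<Inter>(uminus ` \<C>))"
      by (intro hitting_set_Inter_chain[OF fin nonempty chain]) (auto simp: subset_chain_def)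
    moreover have "\<Inter>(uminus ` \<C>) \<subseteq> K"
      using nonempty chain by (auto simp: subset_chain_def)
    moreover have "\<Union>\<C> = - \<Inter>(uminus ` \<C>)"
      by blast
    ultimately show ?thesis
      unfolding \<A>_def by blast
  qed
  moreover have "\<A> \<noteq> {}"
    using \<open>hitting_set F K\<close> by (auto simp: \<A>_def)
  ultimately obtain M where "M \<in> \<A>" and maximal: "\<forall>X\<in>\<A>. M \<subseteq> X \<longrightarrow> X = M"
    using subset_Zorn_nonempty by blast
  then obtain B where "M = - B" "B \<subseteq> K" "hitting_set F B"
    by (auto simp: \<A>_def)
  moreover have "\<not> hitting_set F B'" if "B' \<subset> B" for B'
  proof
    assume "hitting_set F B'"
    then have "- B' \<in> \<A>"
      using that \<open>B \<subseteq> K\<close> unfolding \<A>_def by (intro imageI) auto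
    moreover have "M \<subseteq> - B'"
      using that \<open>M = - B\<close> by blast
    ultimately have "- B' = - B"
      using maximal \<open>M = - B\<close> by blast
    then show False
      using that by simp
  qed
  ultimately have "minimal_hitting_set F B"
    unfolding minimal_hitting_set_def by blast
  with \<open>B \<subseteq> K\<close> show thesis
    by (rule that)
qed

lemma minimal_hitting_sets_meet_iff:
  assumes "\<forall>S\<in>F. finite S"
  shows "(\<forall>B. B \<subseteq> K \<longrightarrow> minimal_hitting_set F B \<longrightarrow> B \<inter> X \<noteq> {}) \<longleftrightarrow> (\<exists>S\<in>F. S \<inter> K \<subseteq> X)"
proof
  assume meets: "\<forall>B. B \<subseteq> K \<longrightarrow> minimal_hitting_set F B \<longrightarrow> B \<inter> X \<noteq> {}"
  have "\<not> hitting_set F (K - X)"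
  proof
    assume "hitting_set F (K - X)"
    then obtain B where "B \<subseteq> K - X" "minimal_hitting_set F B"
      using hitting_set_contains_minimal[OF assms] by blast
    then show False
      using meets by blast
  qed
  then obtain S where "S \<in> F" "S \<inter> (K - X) = {}"
    unfolding hitting_set_def by blast
  then show "\<exists>S\<in>F. S \<inter> K \<subseteq> X"
    by blast
next
  assume "\<exists>S\<in>F. S \<inter> K \<subseteq> X"
  then obtain S where "S \<in> F" "S \<inter> K \<subseteq> X" ..
  show "\<forall>B. B \<subseteq> K \<longrightarrow> minimal_hitting_set F B \<longrightarrow> B \<inter> X \<noteq> {}"
  proof (intro allI impI)
    fix B assume "B \<subseteq> K" "minimal_hitting_set F B"
    then have "S \<inter> B \<noteq> {}"
      using \<open>S \<in> F\<close> by (simp add: minimal_hitting_set_def hitting_set_def)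
    then show "B \<inter> X \<noteq> {}"
      using \<open>B \<subseteq> K\<close> \<open>S \<inter> K \<subseteq> X\<close> by blast
  qed
qed

lemma posp_minus_negp: "posp z - negp z = z"
  by (simp add: vec_eq_iff posp_def negp_def max_def)

lemma posp_uminus [simp]: "posp (- z) = negp z"
  by (simp add: vec_eq_iff posp_def negp_def)

lemma negp_uminus [simp]: "negp (- z) = posp z"
  by (simp add: vec_eq_iff posp_def negp_def)

lemma norm1_uminus [simp]: "norm1 (- z) = norm1 z"
  by (simp add: norm1_def)

lemma norm1_minus_commute: "norm1 (x - y) = norm1 (y - x)"
  by (metis minus_diff_eq norm1_uminus)

lemma abs_nth_le_norm1: "\<bar>z $ i\<bar> \<le> norm1 z"
  unfolding norm1_def by (rule member_le_sum) auto

lemma norm1_pos: "z \<noteq> 0 \<Longrightarrow> 0 < norm1 z"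
  by (metis abs_nth_le_norm1 order_less_le_trans vec_eq_iff zero_index zero_less_abs_iff)

lemma norm1_add_self: "norm1 (z + z) = 2 * norm1 z"
  by (simp add: norm1_def sum_distrib_left abs_mult)

lemma finite_vec_box: "finite {u :: int ^ 'n. \<forall>i. \<bar>u $ i\<bar> \<le> M}"
proof -
  have "a \<in> {-M..M}" if "\<bar>a\<bar> \<le> M" for a
    using that by auto
  then have "vec_nth ` {u :: int ^ 'n. \<forall>i. \<bar>u $ i\<bar> \<le> M} \<subseteq> (\<Pi>\<^sub>E i\<in>UNIV. {-M..M})"
    by (auto simp: PiE_iff)
  then have "finite (vec_nth ` {u :: int ^ 'n. \<forall>i. \<bar>u $ i\<bar> \<le> M})"
    by (rule finite_subset) (intro finite_PiE; simp)
  then show ?thesis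
    by (rule finite_imageD) (simp add: inj_on_def vec_eq_iff)
qed

lemma kerZ_add: "x \<in> kerZ A \<Longrightarrow> y \<in> kerZ A \<Longrightarrow> x + y \<in> kerZ A"
  by (simp add: kerZ_def matrix_vector_right_distrib)

lemma kerZ_diff: "x \<in> kerZ A \<Longrightarrow> y \<in> kerZ A \<Longrightarrow> x - y \<in> kerZ A"
  by (simp add: kerZ_def matrix_vector_mult_diff_distrib)

lemma kerZ_uminus: "x \<in> kerZ A \<Longrightarrow> - x \<in> kerZ A"
  using kerZ_diff[of 0 A x] by (simp add: kerZ_def)

lemma kerZ_uminus_iff [simp]: "- x \<in> kerZ A \<longleftrightarrow> x \<in> kerZ A"
  using kerZ_uminus[of x A] kerZ_uminus[of "- x" A] by auto

section \<open>Reducers and distance decompositions\<close>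

lemma reduces_plus_iff:
  "reduces_plus u z \<longleftrightarrow> (\<exists>v\<in>{u, - u}. natvec (posp z - v) \<and> norm1 (z - v) < norm1 z)"
proof -
  have "posp z + c *s u = posp z - (- (c *s u))" "posp z + c *s u - negp z = z - (- (c *s u))" for c :: int
    using posp_minus_negp[of z] by (simp_all add: algebra_simps)
  then have "reduces_plus u z \<longleftrightarrow>
      (\<exists>c\<in>{1, -1::int}. natvec (posp z - (- (c *s u))) \<and> norm1 (z - (- (c *s u))) < norm1 z)"
    unfolding reduces_plus_def by presburger
  also have "\<dots> \<longleftrightarrow> (\<exists>v\<in>{- u, u}. natvec (posp z - v) \<and> norm1 (z - v) < norm1 z)"
    using vector_sneg_minus1[of u, symmetric] by simp
  finally show ?thesis
    by (auto simp only: insert_commute)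
qed

lemma reduces_minus_iff_reduces_plus_uminus: "reduces_minus u z \<longleftrightarrow> reduces_plus u (- z)"
proof -
  have "norm1 (posp z - (negp z + c *s u)) = norm1 (posp (- z) + c *s u - negp (- z))" for c :: int
    using norm1_minus_commute[of "posp z"] by simp
  then show ?thesis
    unfolding reduces_minus_def reduces_plus_def by simp
qed

definition plus_reducers :: "int ^ 'n \<Rightarrow> (int ^ 'n) set" where
  "plus_reducers z = {u. reduces_plus u z}"

definition reducers :: "int ^ 'n \<Rightarrow> (int ^ 'n) set" where
  "reducers z = {u. reduces_plus u z \<or> reduces_minus u z}"

lemma reducers_eq: "reducers z = plus_reducers z \<union> plus_reducers (- z)"
  unfolding reducers_def plus_reducers_def reduces_minus_iff_reduces_plus_uminus by blast

lemma self_mem_plus_reducers: "z \<noteq> 0 \<Longrightarrow> z \<in> plus_reducers z"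
proof -
  assume "z \<noteq> 0"
  have "natvec (posp z - z)"
    by (simp add: natvec_def posp_def)
  moreover have "norm1 (z - z) < norm1 z"
    using norm1_pos[OF \<open>z \<noteq> 0\<close>] by (simp add: norm1_def)
  ultimately show ?thesis
    unfolding plus_reducers_def reduces_plus_iff by blast
qed

lemma abs_nth_le_of_reduces_plus:
  assumes "reduces_plus u z"
  shows "\<bar>u $ i\<bar> \<le> 2 * norm1 z"
proof -
  obtain v where "v \<in> {u, - u}" "norm1 (z - v) < norm1 z"
    using assms unfolding reduces_plus_iff by blast
  moreover have "\<bar>u $ i\<bar> = \<bar>v $ i\<bar>"
    using \<open>v \<in> {u, - u}\<close> by auto
  moreover have "\<bar>v $ i\<bar> \<le> \<bar>z $ i\<bar> + \<bar>(z - v) $ i\<bar>"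
    by simp
  ultimately show ?thesis
    using abs_nth_le_norm1[of z i] abs_nth_le_norm1[of "z - v" i] by linarith
qed

lemma finite_plus_reducers: "finite (plus_reducers z)"
  by (rule finite_subset[OF _ finite_vec_box[of "2 * norm1 z"]])
    (auto simp: plus_reducers_def abs_nth_le_of_reduces_plus)

lemma finite_reducers: "finite (reducers z)"
  by (simp add: reducers_eq finite_plus_reducers)

lemma leq_vec_posp_iff_natvec: "leq_vec (posp u) (posp z) \<longleftrightarrow> natvec (posp z - u)"
  by (auto simp: leq_vec_def natvec_def posp_def)

lemma pos_dist_decomp_iff:
  "pos_dist_decomp A z u v \<longleftrightarrow> v = z - u \<and> z \<in> kerZ A \<and> u \<in> kerZ A \<and> u \<noteq> 0 \<and> u \<noteq> z
     \<and> natvec (posp z - u) \<and> norm1 (z - u) < norm1 z"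
proof
  assume "pos_dist_decomp A z u v"
  then show "v = z - u \<and> z \<in> kerZ A \<and> u \<in> kerZ A \<and> u \<noteq> 0 \<and> u \<noteq> z
     \<and> natvec (posp z - u) \<and> norm1 (z - u) < norm1 z"
    unfolding pos_dist_decomp_def leq_vec_posp_iff_natvec by (auto intro: kerZ_add)
next
  assume "v = z - u \<and> z \<in> kerZ A \<and> u \<in> kerZ A \<and> u \<noteq> 0 \<and> u \<noteq> z
     \<and> natvec (posp z - u) \<and> norm1 (z - u) < norm1 z"
  then show "pos_dist_decomp A z u v"
    unfolding pos_dist_decomp_def leq_vec_posp_iff_natvec by (auto intro: kerZ_diff)
qed

lemma neg_dist_decomp_iff_uminus: "neg_dist_decomp A z u v \<longleftrightarrow> pos_dist_decomp A (- z) (- u) (- v)"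
proof -
  have "- z = - u + - v \<longleftrightarrow> z = u + v"
    by (metis minus_add_distrib neg_equal_iff_equal)
  then show ?thesis
    unfolding neg_dist_decomp_def pos_dist_decomp_def by auto
qed

lemma Dminus_iff_uminus_Dplus: "z \<in> Dminus A \<longleftrightarrow> - z \<in> Dplus A"
proof -
  have "(\<exists>u v. neg_dist_decomp A z u v) \<longleftrightarrow> (\<exists>u v. pos_dist_decomp A (- z) u v)"
    by (metis neg_dist_decomp_iff_uminus minus_minus)
  then show ?thesis
    unfolding Dminus_def Dplus_def by auto
qed

lemma Dplus_iff_plus_reducers:
  assumes "z \<in> kerZ A" "z \<noteq> 0"
  shows "z \<in> Dplus A \<longleftrightarrow> plus_reducers z \<inter> kerZ A \<subseteq> {z, - z}"
proof -
  have "(\<exists>u v. pos_dist_decomp A z u v) \<longleftrightarrow> (\<exists>u\<in>kerZ A. reduces_plus u z \<and> u \<notin> {z, - z})"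
  proof
    assume "\<exists>u v. pos_dist_decomp A z u v"
    then obtain u where u: "u \<in> kerZ A" "u \<noteq> z" "natvec (posp z - u)" "norm1 (z - u) < norm1 z"
      unfolding pos_dist_decomp_iff by blast
    have "u \<noteq> - z"
    proof
      assume "u = - z"
      then have "norm1 (z - u) = 2 * norm1 z"
        by (simp only: diff_minus_eq_add norm1_add_self)
      then show False
        using u(4) norm1_pos[OF assms(2)] by simp
    qed
    moreover have "reduces_plus u z"
      unfolding reduces_plus_iff using u(3,4) by blast
    ultimately show "\<exists>u\<in>kerZ A. reduces_plus u z \<and> u \<notin> {z, - z}"
      using u(1,2) by blast
  next
    assume "\<exists>u\<in>kerZ A. reduces_plus u z \<and> u \<notin> {z, - z}"
    then obtain u v where u: "u \<in> kerZ A" "u \<notin> {z, - z}"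
      and v: "v \<in> {u, - u}" "natvec (posp z - v)" "norm1 (z - v) < norm1 z"
      unfolding reduces_plus_iff by blast
    then have "v \<in> kerZ A" "v \<noteq> z" "v \<noteq> 0"
      by auto
    with v assms(1) have "pos_dist_decomp A z v (z - v)"
      unfolding pos_dist_decomp_iff by blast
    then show "\<exists>u v. pos_dist_decomp A z u v"
      by blast
  qed
  then show ?thesis
    using assms unfolding Dplus_def plus_reducers_def by blast
qed

lemma Dminus_iff_plus_reducers:
  assumes "z \<in> kerZ A" "z \<noteq> 0"
  shows "z \<in> Dminus A \<longleftrightarrow> plus_reducers (- z) \<inter> kerZ A \<subseteq> {z, - z}"
  using Dplus_iff_plus_reducers[of "- z" A] assms by (simp add: Dminus_iff_uminus_Dplus insert_commute)

section \<open>Distance reducing sets as hitting sets\<close>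

lemma dist_reducing_iff_hitting_set:
  "dist_reducing A B \<longleftrightarrow> B \<subseteq> kerZ A \<and> hitting_set (reducers ` (kerZ A - {0})) B"
proof -
  have "hitting_set (reducers ` (kerZ A - {0})) B \<longleftrightarrow>
      (\<forall>z\<in>kerZ A. z \<noteq> 0 \<longrightarrow> (\<exists>u\<in>B. reduces_plus u z \<or> reduces_minus u z))"
    by (auto simp: hitting_set_def reducers_def)
  then show ?thesis
    by (simp add: dist_reducing_def)
qed

lemma strongly_dist_reducing_iff_hitting_set:
  "strongly_dist_reducing A B \<longleftrightarrow> B \<subseteq> kerZ A \<and> hitting_set (plus_reducers ` (kerZ A - {0})) B"
proof -
  have "strongly_dist_reducing A B \<longleftrightarrow> B \<subseteq> kerZ A \<and>
      (\<forall>z\<in>kerZ A - {0}. plus_reducers z \<inter> B \<noteq> {} \<and> plus_reducers (- z) \<inter> B \<noteq> {})"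
    unfolding strongly_dist_reducing_def plus_reducers_def reduces_minus_iff_reduces_plus_uminus
    by blast
  also have "\<dots> \<longleftrightarrow> B \<subseteq> kerZ A \<and> (\<forall>z\<in>kerZ A - {0}. plus_reducers z \<inter> B \<noteq> {})"
  proof -
    have "- z \<in> kerZ A - {0}" if "z \<in> kerZ A - {0}" for z
      using that by simp
    then show ?thesis
      by blast
  qed
  finally show ?thesis
    unfolding hitting_set_def by blast
qed

lemma minimal_iff_minimal_hitting_set:
  assumes "\<And>B. P B \<longleftrightarrow> B \<subseteq> K \<and> hitting_set F B"
  shows "P B \<and> (\<forall>B'. B' \<subset> B \<longrightarrow> \<not> P B') \<longleftrightarrow> B \<subseteq> K \<and> minimal_hitting_set F B"
  unfolding assms minimal_hitting_set_def by (auto dest: psubset_imp_subset)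

lemma minimal_dist_reducing_iff_minimal_hitting_set:
  "minimal_dist_reducing A B \<longleftrightarrow> B \<subseteq> kerZ A \<and> minimal_hitting_set (reducers ` (kerZ A - {0})) B"
  unfolding minimal_dist_reducing_def
  by (rule minimal_iff_minimal_hitting_set) (rule dist_reducing_iff_hitting_set)

lemma minimal_strongly_dist_reducing_iff_minimal_hitting_set:
  "minimal_strongly_dist_reducing A B \<longleftrightarrow>
     B \<subseteq> kerZ A \<and> minimal_hitting_set (plus_reducers ` (kerZ A - {0})) B"
  unfolding minimal_strongly_dist_reducing_def
  by (rule minimal_iff_minimal_hitting_set) (rule strongly_dist_reducing_iff_hitting_set)

lemma ex_image_inter_subset_pair_iff:
  fixes z :: "'a :: uminus"
  assumes "\<And>w. w \<in> W \<Longrightarrow> w \<in> R w \<inter> K" and "z \<in> W" "- z \<in> W"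
  shows "(\<exists>S\<in>R ` W. S \<inter> K \<subseteq> {z, - z}) \<longleftrightarrow> R z \<inter> K \<subseteq> {z, - z} \<or> R (- z) \<inter> K \<subseteq> {z, - z}"
proof
  assume "\<exists>S\<in>R ` W. S \<inter> K \<subseteq> {z, - z}"
  then obtain w where "w \<in> W" "R w \<inter> K \<subseteq> {z, - z}"
    by blast
  moreover from this have "w = z \<or> w = - z"
    using assms(1) by blast
  ultimately show "R z \<inter> K \<subseteq> {z, - z} \<or> R (- z) \<inter> K \<subseteq> {z, - z}"
    by blast
next
  assume "R z \<inter> K \<subseteq> {z, - z} \<or> R (- z) \<inter> K \<subseteq> {z, - z}"
  then show "\<exists>S\<in>R ` W. S \<inter> K \<subseteq> {z, - z}"
    using assms(2,3) by blast
qed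

lemma Dset_iff_mem_minimal_dist_reducing:
  assumes "z \<in> kerZ A" "z \<noteq> 0"
  shows "z \<in> Dset A \<longleftrightarrow> (\<forall>B. minimal_dist_reducing A B \<longrightarrow> z \<in> B \<or> - z \<in> B)"
proof -
  let ?F = "reducers ` (kerZ A - {0})"
  have "(\<forall>B. minimal_dist_reducing A B \<longrightarrow> z \<in> B \<or> - z \<in> B) \<longleftrightarrow>
      (\<forall>B. B \<subseteq> kerZ A \<longrightarrow> minimal_hitting_set ?F B \<longrightarrow> B \<inter> {z, - z} \<noteq> {})"
    unfolding minimal_dist_reducing_iff_minimal_hitting_set by blast
  also have "\<dots> \<longleftrightarrow> (\<exists>S\<in>?F. S \<inter> kerZ A \<subseteq> {z, - z})"
    by (rule minimal_hitting_sets_meet_iff) (simp add: finite_reducers)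
  also have "\<dots> \<longleftrightarrow> reducers z \<inter> kerZ A \<subseteq> {z, - z}"
    using ex_image_inter_subset_pair_iff[of "kerZ A - {0}" reducers "kerZ A" z] assms
    by (auto simp: reducers_eq self_mem_plus_reducers)
  also have "\<dots> \<longleftrightarrow> z \<in> Dset A"
    using assms by (auto simp: Dset_def Dplus_iff_plus_reducers Dminus_iff_plus_reducers reducers_eq)
  finally show ?thesis
    by blast
qed

lemma Dw_iff_mem_minimal_strongly_dist_reducing:
  assumes "z \<in> kerZ A" "z \<noteq> 0"
  shows "z \<in> Dw A \<longleftrightarrow> (\<forall>B. minimal_strongly_dist_reducing A B \<longrightarrow> z \<in> B \<or> - z \<in> B)"
proof -
  let ?F = "plus_reducers ` (kerZ A - {0})"
  have "(\<forall>B. minimal_strongly_dist_reducing A B \<longrightarrow> z \<in> B \<or> - z \<in> B) \<longleftrightarrow>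
      (\<forall>B. B \<subseteq> kerZ A \<longrightarrow> minimal_hitting_set ?F B \<longrightarrow> B \<inter> {z, - z} \<noteq> {})"
    unfolding minimal_strongly_dist_reducing_iff_minimal_hitting_set by blast
  also have "\<dots> \<longleftrightarrow> (\<exists>S\<in>?F. S \<inter> kerZ A \<subseteq> {z, - z})"
    by (rule minimal_hitting_sets_meet_iff) (simp add: finite_plus_reducers)
  also have "\<dots> \<longleftrightarrow> plus_reducers z \<inter> kerZ A \<subseteq> {z, - z} \<or> plus_reducers (- z) \<inter> kerZ A \<subseteq> {z, - z}"
    using ex_image_inter_subset_pair_iff[of "kerZ A - {0}" plus_reducers "kerZ A" z] assms
    by (auto simp: self_mem_plus_reducers)
  also have "\<dots> \<longleftrightarrow> z \<in> Dw A"
    using assms by (auto simp: Dw_def Dplus_iff_plus_reducers Dminus_iff_plus_reducers)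
  finally show ?thesis
    by blast
qed

theorem proposition8p5:
  fixes A :: "int ^ 'n ^ 'd"
  assumes "kerZ A \<inter> {v. natvec v} = {0}"
  shows "\<forall>z\<in>kerZ A. z \<noteq> 0 \<longrightarrow>
           (z \<in> Dset A \<longleftrightarrow> (\<forall>B. minimal_dist_reducing A B \<longrightarrow> z \<in> B \<or> - z \<in> B)) \<and>
           (z \<in> Dw A \<longleftrightarrow> (\<forall>B. minimal_strongly_dist_reducing A B \<longrightarrow> z \<in> B \<or> - z \<in> B))"
  using Dset_iff_mem_minimal_dist_reducing Dw_iff_mem_minimal_strongly_dist_reducing by blast

end
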